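(* Let $\Lambda=\{\frac{1}{n+1}:n\in\mathbb{N}_0\}$ and $\Lambda_0=\Lambda\cup\{0\}$. For each $t\in[0,1)$, $$\sigma_{pt}(C_t;H(\mathbb{D}))=\sigma(C_t;H(\mathbb{D}))=\Lambda\quad\text{and}\quad\sigma^*(C_t;H(\mathbb{D}))=\Lambda_0.$$
   Context: $\mathbb{N}_0=\{0,1,2,\dots\}$, $\mathbb{D}=\{z\in\mathbb{C}:|z|<1\}$, and $H(\mathbb{D})$ is the Fréchet space of holomorphic functions on $\mathbb{D}$ with the topology of uniform convergence on compact subsets. For $t\in[0,1]$, $C_t$ is defined on $f\in H(\mathbb{D})$ by $C_tf(0)=f(0)$ and $C_tf(z)=\frac{1}{z}\int_0^z\frac{f(\xi)}{1-t\xi}\,d\xi$ for $z\neq0$. For a continuous linear operator $T$ on a locally convex Hausdorff space $X$: the resolvent set $\rho(T;X)$ is the set of $\lambda\in\mathbb{C}$ such that $(\lambda I-T)^{-1}$ exists as a continuous linear operator on $X$, $\sigma(T;X)=\mathbb{C}\setminus\rho(T;X)$, and $\sigma_{pt}(T;X)$ is the set of $\lambda$ for which $\lambda I-T$ is not injective. $\rho^*(T;X)$ is the set of $\lambda\in\mathbb{C}$ for which there is $\delta>0$ with $\{\mu:|\mu-\lambda|<\delta\}\subseteq\rho(T;X)$ and $\{(\mu I-T)^{-1}:|\mu-\lambda|<\delta\}$ equicontinuous in the space of continuous linear operators on $X$; $\sigma^*(T;X)=\mathbb{C}\setminus\rho^*(T;X)$. *)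

theory Defs
  imports "HOL-Complex_Analysis.Complex_Analysis"
begin

text \<open>The space H(D): functions holomorphic on the open unit disc. Two functions
  are identified when they agree on the disc; all equations below are stated on the disc.\<close>

definition HD :: "(complex \<Rightarrow> complex) set" where
  "HD = {f. f holomorphic_on ball 0 1}"

definition Ct :: "real \<Rightarrow> (complex \<Rightarrow> complex) \<Rightarrow> (complex \<Rightarrow> complex)" where
  "Ct t f = (\<lambda>z. if z = 0 then f 0
      else (1 / z) * contour_integral (linepath 0 z) (\<lambda>\<xi>. f \<xi> / (1 - complex_of_real t * \<xi>)))"

definition lin_op :: "((complex \<Rightarrow> complex) \<Rightarrow> (complex \<Rightarrow> complex)) \<Rightarrow> bool" where
  "lin_op T \<longleftrightarrow> (\<forall>f\<in>HD. T f \<in> HD) \<and>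
     (\<forall>f\<in>HD. \<forall>g\<in>HD. \<forall>z\<in>ball 0 1. T (\<lambda>w. f w + g w) z = T f z + T g z) \<and>
     (\<forall>f\<in>HD. \<forall>c. \<forall>z\<in>ball 0 1. T (\<lambda>w. c * f w) z = c * T f z)"

text \<open>Equicontinuity of a family of linear operators w.r.t. the topology of uniform
  convergence on compact subsets of D (generated by the seminorms sup_K |f|,
  K compact in D). A single operator is continuous iff the singleton family is equicontinuous.\<close>

definition equicont_ops :: "((complex \<Rightarrow> complex) \<Rightarrow> (complex \<Rightarrow> complex)) set \<Rightarrow> bool" where
  "equicont_ops \<T> \<longleftrightarrow> (\<forall>K. compact K \<and> K \<subseteq> ball 0 1 \<longrightarrow>
     (\<exists>K' C. compact K' \<and> K' \<noteq> {} \<and> K' \<subseteq> ball 0 1 \<and>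
        (\<forall>T\<in>\<T>. \<forall>f\<in>HD. \<forall>z\<in>K. norm (T f z) \<le> C * (SUP w\<in>K'. norm (f w)))))"

definition cont_lin_op :: "((complex \<Rightarrow> complex) \<Rightarrow> (complex \<Rightarrow> complex)) \<Rightarrow> bool" where
  "cont_lin_op T \<longleftrightarrow> lin_op T \<and> equicont_ops {T}"

definition is_inverse_of :: "((complex \<Rightarrow> complex) \<Rightarrow> (complex \<Rightarrow> complex)) \<Rightarrow> complex
     \<Rightarrow> ((complex \<Rightarrow> complex) \<Rightarrow> (complex \<Rightarrow> complex)) \<Rightarrow> bool" where
  "is_inverse_of T lam S \<longleftrightarrow> (\<forall>g\<in>HD. S g \<in> HD) \<and>
     (\<forall>g\<in>HD. \<forall>z\<in>ball 0 1. lam * S g z - T (S g) z = g z) \<and>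
     (\<forall>f\<in>HD. \<forall>z\<in>ball 0 1. S (\<lambda>w. lam * f w - T f w) z = f z)"

definition resolvent_set :: "((complex \<Rightarrow> complex) \<Rightarrow> (complex \<Rightarrow> complex)) \<Rightarrow> complex set" where
  "resolvent_set T = {lam. \<exists>S. cont_lin_op S \<and> is_inverse_of T lam S}"

definition spectrum_H :: "((complex \<Rightarrow> complex) \<Rightarrow> (complex \<Rightarrow> complex)) \<Rightarrow> complex set" where
  "spectrum_H T = - resolvent_set T"

definition point_spectrum_H :: "((complex \<Rightarrow> complex) \<Rightarrow> (complex \<Rightarrow> complex)) \<Rightarrow> complex set" where
  "point_spectrum_H T = {lam. \<exists>f\<in>HD. (\<exists>z\<in>ball 0 1. f z \<noteq> 0) \<and>
      (\<forall>z\<in>ball 0 1. lam * f z - T f z = 0)}"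

definition resolvent_star :: "((complex \<Rightarrow> complex) \<Rightarrow> (complex \<Rightarrow> complex)) \<Rightarrow> complex set" where
  "resolvent_star T = {lam. \<exists>\<delta>>0. ball lam \<delta> \<subseteq> resolvent_set T \<and>
      equicont_ops {S. \<exists>mu\<in>ball lam \<delta>. cont_lin_op S \<and> is_inverse_of T mu S}}"

definition spectrum_star :: "((complex \<Rightarrow> complex) \<Rightarrow> (complex \<Rightarrow> complex)) \<Rightarrow> complex set" where
  "spectrum_star T = - resolvent_star T"

end

theory Submission
  imports Defs
begin

(* On Taylor coefficients, C_t acts by f_k \<mapsto> (f / (1 - t z))_k / (k + 1). Writing
   f = A (1 - t z), the equation \<mu> f - C_t f = g becomes the first order recurrence
   (\<mu> - 1/(k+1)) A_k - \<mu> t A_(k-1) = g_k, which is uniquely solvable exactly when \<mu> \<notin> \<Lambda>;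
   for \<mu> = 1/(n+1) the function z^n / (1 - t z)^(n+1) is an eigenfunction. Cauchy estimates
   bound the coefficients of the solution by those of g, uniformly for \<mu> near any point
   outside the closed set \<Lambda> \<union> {0}, which gives continuous and locally equicontinuous
   resolvents there; \<mu> = 0 is treated directly. Finally, \<sigma>* is closed and contains \<Lambda>,
   whose closure is \<Lambda> \<union> {0}. *)

lemma ereal_norm_less_conv_radius:
  assumes "1 \<le> fps_conv_radius F" "z \<in> ball 0 1"
  shows "ereal (norm z) < fps_conv_radius F"
proof -
  have "ereal (norm z) < 1" using assms(2) by simp
  then show ?thesis using assms(1) by (rule less_le_trans)
qed

lemma fps_conv_radius_add_ge_1:
  "1 \<le> fps_conv_radius F \<Longrightarrow> 1 \<le> fps_conv_radius G \<Longrightarrow> 1 \<le> fps_conv_radius (F + G)"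
  using fps_conv_radius_add[of F G] by (meson min.bounded_iff order_trans)

lemma fps_conv_radius_diff_ge_1:
  "1 \<le> fps_conv_radius F \<Longrightarrow> 1 \<le> fps_conv_radius G \<Longrightarrow> 1 \<le> fps_conv_radius (F - G)"
  using fps_conv_radius_diff[of F G] by (meson min.bounded_iff order_trans)

lemma fps_conv_radius_mult_ge_1:
  "1 \<le> fps_conv_radius F \<Longrightarrow> 1 \<le> fps_conv_radius G \<Longrightarrow> 1 \<le> fps_conv_radius (F * G)"
  using fps_conv_radius_mult[of F G] by (meson min.bounded_iff order_trans)

lemma fps_conv_radius_const_mult_ge_1:
  "1 \<le> fps_conv_radius F \<Longrightarrow> 1 \<le> fps_conv_radius (fps_const c * F)"
  by (simp add: fps_conv_radius_mult_ge_1)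

lemma
  assumes "f \<in> HD"
  shows fps_conv_radius_expansion_HD: "1 \<le> fps_conv_radius (fps_expansion f 0)"
    and eval_fps_expansion_HD: "z \<in> ball 0 1 \<Longrightarrow> eval_fps (fps_expansion f 0) z = f z"
proof -
  have hol: "f holomorphic_on eball 0 1"
    using assms by (simp add: HD_def one_ereal_def)
  show "1 \<le> fps_conv_radius (fps_expansion f 0)"
    by (rule conv_radius_fps_expansion[OF hol])
  show "z \<in> ball 0 1 \<Longrightarrow> eval_fps (fps_expansion f 0) z = f z"
    using eval_fps_expansion'[OF hol, of z] by (simp add: one_ereal_def)
qed

lemma fps_expansion_eqI_disc:
  assumes "1 \<le> fps_conv_radius F" and "\<And>z. z \<in> ball 0 1 \<Longrightarrow> f z = eval_fps F z"
  shows "fps_expansion f 0 = F"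
proof (rule fps_expansion_eqI)
  have "eventually (\<lambda>z. z \<in> ball (0::complex) 1) (nhds 0)"
    by (intro eventually_nhds_in_open) auto
  then have "eventually (\<lambda>z. eval_fps F z = f z) (nhds 0)"
    by eventually_elim (use assms(2) in auto)
  moreover have "0 < fps_conv_radius F"
    by (rule less_le_trans[OF _ assms(1)]) simp
  ultimately show "f has_fps_expansion F"
    by (simp add: has_fps_expansion_def)
qed

lemma fps_expansion_add_HD:
  assumes "f \<in> HD" "g \<in> HD"
  shows "fps_expansion (\<lambda>w. f w + g w) 0 = fps_expansion f 0 + fps_expansion g 0"
  using assms
  by (intro fps_expansion_eqI_disc)
     (simp_all add: eval_fps_add ereal_norm_less_conv_radius fps_conv_radius_add_ge_1
        fps_conv_radius_expansion_HD eval_fps_expansion_HD)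

lemma fps_expansion_cmult_HD:
  assumes "f \<in> HD"
  shows "fps_expansion (\<lambda>w. c * f w) 0 = fps_const c * fps_expansion f 0"
  using assms
  by (intro fps_expansion_eqI_disc)
     (simp_all add: eval_fps_mult ereal_norm_less_conv_radius fps_conv_radius_const_mult_ge_1
        fps_conv_radius_expansion_HD eval_fps_expansion_HD)

lemma fps_conv_radius_mono_coeffs:
  fixes F G :: "complex fps"
  assumes "\<And>n. norm (G $ n) \<le> norm (F $ n)"
  shows "fps_conv_radius F \<le> fps_conv_radius G"
  unfolding fps_conv_radius_def
proof (rule conv_radius_geI_ex')
  fix r :: real assume r: "0 < r" "ereal r < conv_radius (fps_nth F)"
  have "summable (\<lambda>n. norm (F $ n * complex_of_real r ^ n))"
    using r by (intro norm_summable_fps) (simp_all add: fps_conv_radius_def)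
  then show "summable (\<lambda>n. G $ n * complex_of_real r ^ n)"
    by (rule summable_norm_cancel[OF summable_comparison_test'])
       (use assms r in \<open>auto simp: norm_mult intro: mult_right_mono\<close>)
qed

section \<open>The operator \<open>C\<^sub>t\<close> on power series\<close>

definition geom_fps :: "real \<Rightarrow> complex fps" where
  "geom_fps t = Abs_fps (\<lambda>n. complex_of_real t ^ n)"

lemma geom_fps_times_one_minus: "geom_fps t * (1 - fps_const (of_real t) * fps_X) = 1"
proof (rule fps_ext)
  fix n show "(geom_fps t * (1 - fps_const (of_real t) * fps_X)) $ n = 1 $ n"
    by (cases n) (simp_all add: geom_fps_def algebra_simps mult.commute[of _ fps_X])
qed

lemma norm_of_real_mult_less_1:
  assumes "\<bar>t\<bar> \<le> 1" "z \<in> ball 0 1"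
  shows "norm (complex_of_real t * z) < 1"
proof -
  have "\<bar>t\<bar> * norm z \<le> 1 * norm z" using assms by (intro mult_right_mono) auto
  then show ?thesis using assms by (simp add: norm_mult)
qed

lemma one_minus_of_real_mult_nonzero:
  "\<bar>t\<bar> \<le> 1 \<Longrightarrow> z \<in> ball 0 1 \<Longrightarrow> 1 - complex_of_real t * z \<noteq> 0"
  using norm_of_real_mult_less_1[of t z] by auto

lemma
  assumes "\<bar>t\<bar> \<le> 1"
  shows fps_conv_radius_geom_fps: "1 \<le> fps_conv_radius (geom_fps t)"
    and eval_geom_fps: "z \<in> ball 0 1 \<Longrightarrow> eval_fps (geom_fps t) z = 1 / (1 - complex_of_real t * z)"
proof -
  have geom: "(\<lambda>n. geom_fps t $ n * z ^ n) sums (1 / (1 - complex_of_real t * z))"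
    if "z \<in> ball 0 1" for z
    using geometric_sums[OF norm_of_real_mult_less_1[OF assms that]]
    by (simp add: geom_fps_def power_mult_distrib)
  show "1 \<le> fps_conv_radius (geom_fps t)"
    unfolding fps_conv_radius_def
  proof (rule conv_radius_geI_ex')
    fix r :: real assume "0 < r" "ereal r < 1"
    then show "summable (\<lambda>n. geom_fps t $ n * of_real r ^ n)"
      using geom[of "of_real r"] by (auto simp: sums_iff)
  qed
  show "z \<in> ball 0 1 \<Longrightarrow> eval_fps (geom_fps t) z = 1 / (1 - complex_of_real t * z)"
    using geom by (simp add: eval_fps_def sums_iff)
qed

definition cesaro_fps :: "real \<Rightarrow> complex fps \<Rightarrow> complex fps" where
  "cesaro_fps t H = Abs_fps (\<lambda>k. (H * geom_fps t) $ k / of_nat (Suc k))"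

lemma cesaro_fps_add: "cesaro_fps t (F + G) = cesaro_fps t F + cesaro_fps t G"
  by (rule fps_ext) (simp add: cesaro_fps_def distrib_right add_divide_distrib)

lemma cesaro_fps_const_mult: "cesaro_fps t (fps_const c * F) = fps_const c * cesaro_fps t F"
  by (rule fps_ext) (simp add: cesaro_fps_def mult.assoc)

lemma cesaro_fps_0: "cesaro_fps t 0 = 0"
  by (rule fps_ext) (simp add: cesaro_fps_def)

lemma fps_deriv_fps_X_cesaro_fps: "fps_deriv (fps_X * cesaro_fps t H) = H * geom_fps t"
proof (rule fps_ext)
  fix n
  have "(of_nat (Suc n) :: complex) \<noteq> 0" by (simp only: of_nat_eq_0_iff)
  then show "fps_deriv (fps_X * cesaro_fps t H) $ n = (H * geom_fps t) $ n"
    by (simp only: fps_deriv_nth fps_X_mult_nth cesaro_fps_def) simp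
qed

lemma fps_conv_radius_cesaro_fps:
  assumes "1 \<le> fps_conv_radius H" "\<bar>t\<bar> \<le> 1"
  shows "1 \<le> fps_conv_radius (cesaro_fps t H)"
proof -
  have "norm (cesaro_fps t H $ n) \<le> norm ((H * geom_fps t) $ n)" for n
  proof -
    have "norm ((H * geom_fps t) $ n) / real (Suc n) \<le> norm ((H * geom_fps t) $ n) / 1"
      by (intro divide_left_mono) auto
    then show ?thesis by (simp add: cesaro_fps_def norm_divide del: of_nat_Suc)
  qed
  then have "fps_conv_radius (H * geom_fps t) \<le> fps_conv_radius (cesaro_fps t H)"
    by (rule fps_conv_radius_mono_coeffs)
  then show ?thesis
    using assms by (meson order_trans fps_conv_radius_mult_ge_1 fps_conv_radius_geom_fps)
qed

lemma has_contour_integral_linepath_eval_fps_deriv: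
  fixes P :: "complex fps"
  assumes P: "1 \<le> fps_conv_radius P" and z: "z \<in> ball 0 1"
  shows "(eval_fps (fps_deriv P) has_contour_integral (eval_fps P z - eval_fps P 0)) (linepath 0 z)"
proof -
  have "(eval_fps P has_field_derivative eval_fps (fps_deriv P) w) (at w within ball 0 1)"
    if "w \<in> ball 0 1" for w
    by (rule has_field_derivative_eval_fps[OF ereal_norm_less_conv_radius[OF P that]])
  moreover have "path_image (linepath 0 z) \<subseteq> ball 0 1"
    using z by (simp add: closed_segment_subset)
  ultimately have "(eval_fps (fps_deriv P) has_contour_integral
      (eval_fps P (pathfinish (linepath 0 z)) - eval_fps P (pathstart (linepath 0 z)))) (linepath 0 z)"
    by (rule contour_integral_primitive[OF _ valid_path_linepath])
  then show ?thesis by simp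
qed

text \<open>The power series of \<open>z \<mapsto> z \<cdot> C\<^sub>t f(z)\<close> is a primitive of that of
  \<open>f(z) / (1 - t z)\<close>, so the contour integral in the definition of \<open>C\<^sub>t\<close> is read off it.\<close>

lemma Ct_eq_eval_cesaro_fps:
  assumes f: "f \<in> HD" and t: "\<bar>t\<bar> \<le> 1" and z: "z \<in> ball 0 1"
  shows "Ct t f z = eval_fps (cesaro_fps t (fps_expansion f 0)) z"
proof -
  define F where "F = fps_expansion f 0"
  define P where "P = fps_X * cesaro_fps t F"
  have rF: "1 \<le> fps_conv_radius F"
    using f by (simp add: F_def fps_conv_radius_expansion_HD)
  have rC: "1 \<le> fps_conv_radius (cesaro_fps t F)"
    using fps_conv_radius_cesaro_fps[OF rF t] .
  have deriv_P: "eval_fps (fps_deriv P) w = f w / (1 - complex_of_real t * w)"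
    if "w \<in> ball 0 1" for w
    using that rF t unfolding P_def fps_deriv_fps_X_cesaro_fps
    by (simp add: eval_fps_mult ereal_norm_less_conv_radius
        fps_conv_radius_geom_fps eval_geom_fps F_def eval_fps_expansion_HD[OF f])
  have "(eval_fps (fps_deriv P) has_contour_integral eval_fps P z) (linepath 0 z)"
    using has_contour_integral_linepath_eval_fps_deriv[of P z] rC z
    by (simp add: P_def fps_conv_radius_mult_ge_1 eval_fps_at_0)
  then have "((\<lambda>w. f w / (1 - complex_of_real t * w)) has_contour_integral eval_fps P z)
      (linepath 0 z)"
  proof (rule has_contour_integral_eq)
    show "eval_fps (fps_deriv P) w = f w / (1 - complex_of_real t * w)"
      if "w \<in> path_image (linepath 0 z)" for w
      using that z closed_segment_subset[of 0 "ball 0 1" z] by (intro deriv_P) auto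
  qed
  then have integral: "contour_integral (linepath 0 z) (\<lambda>w. f w / (1 - complex_of_real t * w))
      = z * eval_fps (cesaro_fps t F) z"
    using z rC by (simp add: contour_integral_unique P_def eval_fps_mult ereal_norm_less_conv_radius)
  have at_0: "eval_fps (cesaro_fps t F) 0 = f 0"
    using eval_fps_expansion_HD[OF f, of 0]
    by (simp add: eval_fps_at_0 cesaro_fps_def geom_fps_def fps_mult_nth F_def)
  show ?thesis
    using integral at_0 by (cases "z = 0") (simp_all add: Ct_def F_def)
qed

lemma Ct_in_HD:
  assumes "f \<in> HD" "\<bar>t\<bar> \<le> 1"
  shows "Ct t f \<in> HD"
proof -
  have "eval_fps (cesaro_fps t (fps_expansion f 0)) holomorphic_on ball 0 1"
    using assms
    by (intro holomorphic_on_eval_fps ball_eball_mono)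
       (simp_all add: fps_conv_radius_cesaro_fps fps_conv_radius_expansion_HD flip: one_ereal_def)
  then show ?thesis
    unfolding HD_def using Ct_eq_eval_cesaro_fps[OF assms] holomorphic_cong by blast
qed

lemma shifted_Ct_eq_eval_fps:
  assumes "f \<in> HD" "\<bar>t\<bar> \<le> 1" "z \<in> ball 0 1"
  shows "\<mu> * f z - Ct t f z
    = eval_fps (fps_const \<mu> * fps_expansion f 0 - cesaro_fps t (fps_expansion f 0)) z"
  using assms
  by (simp add: Ct_eq_eval_cesaro_fps eval_fps_diff eval_fps_mult eval_fps_expansion_HD
      ereal_norm_less_conv_radius fps_conv_radius_const_mult_ge_1 fps_conv_radius_cesaro_fps
      fps_conv_radius_expansion_HD)

lemma fps_expansion_shifted_Ct:
  assumes "f \<in> HD" "\<bar>t\<bar> \<le> 1"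
  shows "fps_expansion (\<lambda>w. \<mu> * f w - Ct t f w) 0
    = fps_const \<mu> * fps_expansion f 0 - cesaro_fps t (fps_expansion f 0)"
  using assms
  by (intro fps_expansion_eqI_disc)
     (simp_all add: shifted_Ct_eq_eval_fps fps_conv_radius_diff_ge_1 fps_conv_radius_const_mult_ge_1
       fps_conv_radius_cesaro_fps fps_conv_radius_expansion_HD)

section \<open>Solving \<open>\<mu> f - C\<^sub>t f = g\<close>\<close>

definition Lambda :: "complex set" where
  "Lambda = {1 / of_nat (n + 1) | n :: nat. True}"

lemma not_in_Lambda_nonzero: "\<mu> \<notin> Lambda \<Longrightarrow> \<mu> - 1 / of_nat (Suc k) \<noteq> 0"
  by (auto simp: Lambda_def)

fun resolvent_seq :: "real \<Rightarrow> complex \<Rightarrow> complex fps \<Rightarrow> nat \<Rightarrow> complex" where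
  "resolvent_seq t \<mu> C 0 = C $ 0 / (\<mu> - 1)"
| "resolvent_seq t \<mu> C (Suc k) =
     (C $ Suc k + \<mu> * of_real t * resolvent_seq t \<mu> C k) / (\<mu> - 1 / of_nat (Suc (Suc k)))"

definition resolvent_fps :: "real \<Rightarrow> complex \<Rightarrow> complex fps \<Rightarrow> complex fps" where
  "resolvent_fps t \<mu> C = Abs_fps (resolvent_seq t \<mu> C) * (1 - fps_const (of_real t) * fps_X)"

lemma times_one_minus_nth:
  fixes A :: "'a::comm_ring_1 fps"
  shows "(A * (1 - fps_const c * fps_X)) $ k = A $ k - (if k = 0 then 0 else c * A $ (k - 1))"
proof -
  have "A * (1 - fps_const c * fps_X) = A - fps_const c * (fps_X * A)"
    by (simp add: algebra_simps)
  then show ?thesis by simp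
qed

lemma one_minus_times_geom_fps: "(1 - fps_const (of_real t) * fps_X) * geom_fps t = 1"
  by (subst mult.commute) (rule geom_fps_times_one_minus)

lemma cesaro_fps_times_one_minus:
  "cesaro_fps t (A * (1 - fps_const (of_real t) * fps_X)) = Abs_fps (\<lambda>k. A $ k / of_nat (Suc k))"
  by (simp add: cesaro_fps_def mult.assoc one_minus_times_geom_fps)

lemma shifted_cesaro_fps_times_one_minus_nth:
  "(fps_const \<mu> * (A * (1 - fps_const (of_real t) * fps_X))
      - cesaro_fps t (A * (1 - fps_const (of_real t) * fps_X))) $ k
    = (\<mu> - 1 / of_nat (Suc k)) * A $ k - (if k = 0 then 0 else \<mu> * of_real t * A $ (k - 1))"
  by (simp only: fps_sub_nth fps_mult_left_const_nth times_one_minus_nth cesaro_fps_times_one_minus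
      fps_nth_Abs_fps) (simp add: algebra_simps)

lemma resolvent_seq_unique:
  assumes \<mu>: "\<mu> \<notin> Lambda"
  shows "(\<forall>k. (\<mu> - 1 / of_nat (Suc k)) * a k - (if k = 0 then 0 else \<mu> * of_real t * a (k - 1))
            = C $ k)
         \<longleftrightarrow> a = resolvent_seq t \<mu> C"
proof
  assume rec: "\<forall>k. (\<mu> - 1 / of_nat (Suc k)) * a k
                   - (if k = 0 then 0 else \<mu> * of_real t * a (k - 1)) = C $ k"
  show "a = resolvent_seq t \<mu> C"
  proof
    fix k show "a k = resolvent_seq t \<mu> C k"
    proof (induction k)
      case 0
      have "(\<mu> - 1) * a 0 = C $ 0"
        using rec[rule_format, of 0] by simp
      then show ?case
        using not_in_Lambda_nonzero[OF \<mu>, of 0] by (simp add: eq_divide_eq mult.commute)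
    next
      case (Suc k)
      have "(\<mu> - 1 / of_nat (Suc (Suc k))) * a (Suc k) = C $ Suc k + \<mu> * of_real t * a k"
        using rec[rule_format, of "Suc k"] by (simp add: algebra_simps del: of_nat_Suc)
      then show ?case
        using not_in_Lambda_nonzero[OF \<mu>, of "Suc k"] Suc.IH
        by (simp add: eq_divide_eq mult.commute del: of_nat_Suc)
    qed
  qed
next
  assume a: "a = resolvent_seq t \<mu> C"
  show "\<forall>k. (\<mu> - 1 / of_nat (Suc k)) * a k
           - (if k = 0 then 0 else \<mu> * of_real t * a (k - 1)) = C $ k"
  proof
    fix k show "(\<mu> - 1 / of_nat (Suc k)) * a k
                  - (if k = 0 then 0 else \<mu> * of_real t * a (k - 1)) = C $ k"
      using not_in_Lambda_nonzero[OF \<mu>, of k] unfolding a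
      by (cases k) (simp, simp del: of_nat_Suc)
  qed
qed

lemma shifted_cesaro_fps_eq_iff:
  assumes "\<mu> \<notin> Lambda"
  shows "fps_const \<mu> * H - cesaro_fps t H = C \<longleftrightarrow> H = resolvent_fps t \<mu> C"
proof -
  define A where "A = H * geom_fps t"
  have H: "H = A * (1 - fps_const (of_real t) * fps_X)"
    by (simp add: A_def mult.assoc geom_fps_times_one_minus)
  have "fps_const \<mu> * H - cesaro_fps t H = C \<longleftrightarrow> (\<lambda>k. A $ k) = resolvent_seq t \<mu> C"
    unfolding resolvent_seq_unique[OF assms, symmetric] fps_eq_iff H
    by (simp only: shifted_cesaro_fps_times_one_minus_nth)
  also have "\<dots> \<longleftrightarrow> A = Abs_fps (resolvent_seq t \<mu> C)"
    by (auto simp: fps_eq_iff)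
  also have "\<dots> \<longleftrightarrow> H = resolvent_fps t \<mu> C"
  proof
    assume "A = Abs_fps (resolvent_seq t \<mu> C)"
    with H show "H = resolvent_fps t \<mu> C" by (simp add: resolvent_fps_def)
  next
    assume "H = resolvent_fps t \<mu> C"
    then show "A = Abs_fps (resolvent_seq t \<mu> C)"
      by (simp add: A_def resolvent_fps_def mult.assoc one_minus_times_geom_fps)
  qed
  finally show ?thesis .
qed

lemma shifted_cesaro_resolvent_fps:
  "\<mu> \<notin> Lambda \<Longrightarrow> fps_const \<mu> * resolvent_fps t \<mu> C - cesaro_fps t (resolvent_fps t \<mu> C) = C"
  by (simp add: shifted_cesaro_fps_eq_iff)

lemma resolvent_fps_add:
  assumes "\<mu> \<notin> Lambda"
  shows "resolvent_fps t \<mu> (C + D) = resolvent_fps t \<mu> C + resolvent_fps t \<mu> D"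
proof -
  let ?R = "resolvent_fps t \<mu>"
  have "fps_const \<mu> * (?R C + ?R D) - cesaro_fps t (?R C + ?R D)
      = (fps_const \<mu> * ?R C - cesaro_fps t (?R C)) + (fps_const \<mu> * ?R D - cesaro_fps t (?R D))"
    by (simp add: cesaro_fps_add algebra_simps)
  also have "\<dots> = C + D"
    using assms by (simp add: shifted_cesaro_resolvent_fps)
  finally show ?thesis
    unfolding shifted_cesaro_fps_eq_iff[OF assms] by simp
qed

lemma resolvent_fps_const_mult:
  assumes "\<mu> \<notin> Lambda"
  shows "resolvent_fps t \<mu> (fps_const c * C) = fps_const c * resolvent_fps t \<mu> C"
proof -
  let ?R = "resolvent_fps t \<mu>"
  have "fps_const \<mu> * (fps_const c * ?R C) - cesaro_fps t (fps_const c * ?R C)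
      = fps_const c * (fps_const \<mu> * ?R C - cesaro_fps t (?R C))"
    by (simp add: cesaro_fps_const_mult algebra_simps)
  also have "\<dots> = fps_const c * C"
    using assms by (simp add: shifted_cesaro_resolvent_fps)
  finally show ?thesis
    unfolding shifted_cesaro_fps_eq_iff[OF assms] by simp
qed

lemma resolvent_fps_0:
  assumes "\<mu> \<notin> Lambda"
  shows "resolvent_fps t \<mu> 0 = 0"
  using shifted_cesaro_fps_eq_iff[OF assms, of 0 t 0] by (simp add: cesaro_fps_0)

section \<open>Coefficient bounds for the resolvent\<close>

lemma recurrence_bound_geometric:
  fixes u d :: "nat \<Rightarrow> real"
  assumes M: "0 \<le> M" and q: "0 \<le> q" "q \<le> Q" and \<epsilon>: "0 < \<epsilon>"
    and u: "\<And>k. 0 \<le> u k"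
    and start: "u 0 * d 0 \<le> M"
    and step: "\<And>k. u (Suc k) * d (Suc k) \<le> M + q * u k"
    and d_lower: "\<And>k. \<epsilon> \<le> d k"
  shows "u k \<le> M * max 1 ((1 + Q) / \<epsilon>) ^ Suc k"
proof -
  define B where "B = max 1 ((1 + Q) / \<epsilon>)"
  have B1: "1 \<le> B" by (simp add: B_def)
  have BQ: "1 + Q \<le> B * \<epsilon>"
    using \<epsilon> by (simp add: B_def pos_divide_le_eq[symmetric])
  have B\<epsilon>: "1 \<le> B * \<epsilon>" using BQ q by linarith
  show ?thesis
    unfolding B_def[symmetric]
  proof (induction k)
    case 0
    have "u 0 * \<epsilon> \<le> u 0 * d 0" using d_lower[of 0] u[of 0] by (rule mult_left_mono)
    also have "\<dots> \<le> M" by (rule start)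
    also have "\<dots> \<le> (M * B) * \<epsilon>" using mult_left_mono[OF B\<epsilon> M] by (simp add: mult.assoc)
    finally show ?case using \<epsilon> by simp
  next
    case (Suc k)
    have "u (Suc k) * \<epsilon> \<le> u (Suc k) * d (Suc k)"
      using d_lower[of "Suc k"] u[of "Suc k"] by (rule mult_left_mono)
    also have "\<dots> \<le> M + q * u k" by (rule step)
    also have "\<dots> \<le> M * B ^ Suc k + Q * (M * B ^ Suc k)"
    proof (rule add_mono)
      show "M \<le> M * B ^ Suc k" using mult_left_mono[OF one_le_power[OF B1, of "Suc k"] M] by simp
      show "q * u k \<le> Q * (M * B ^ Suc k)" using Suc.IH q u[of k] by (intro mult_mono) auto
    qed
    also have "\<dots> = (M * B ^ Suc k) * (1 + Q)" by (simp add: algebra_simps)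
    also have "\<dots> \<le> (M * B ^ Suc k) * (B * \<epsilon>)"
      using BQ M B1 by (intro mult_left_mono) auto
    finally show ?case using \<epsilon> by (simp add: algebra_simps)
  qed
qed

text \<open>From \<open>k\<^sub>0\<close> on, any bound \<open>u\<^sub>k \<le> D M\<close> with \<open>D \<delta> \<ge> 1\<close> propagates through the recurrence;
  up to \<open>k\<^sub>0\<close> the geometric bound is used.\<close>

lemma recurrence_bound:
  fixes u d :: "nat \<Rightarrow> real"
  assumes M: "0 \<le> M" and q: "0 \<le> q" "q \<le> Q" and \<epsilon>: "0 < \<epsilon>" and \<delta>: "0 < \<delta>"
    and u: "\<And>k. 0 \<le> u k"
    and start: "u 0 * d 0 \<le> M"
    and step: "\<And>k. u (Suc k) * d (Suc k) \<le> M + q * u k"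
    and d_lower: "\<And>k. \<epsilon> \<le> d k"
    and d_late: "\<And>k. k0 \<le> k \<Longrightarrow> q + \<delta> \<le> d k"
  shows "u k \<le> max (max 1 ((1 + Q) / \<epsilon>) ^ Suc k0) (1 / \<delta>) * M"
proof -
  define B where "B = max 1 ((1 + Q) / \<epsilon>)"
  define D where "D = max (B ^ Suc k0) (1 / \<delta>)"
  have D\<delta>: "1 \<le> D * \<delta>"
  proof -
    have "1 / \<delta> \<le> D" by (simp add: D_def)
    then show ?thesis using \<delta> by (simp add: field_simps)
  qed
  have "0 \<le> D" using \<delta> by (simp add: D_def le_max_iff_disj)
  with M have DM: "0 \<le> D * M" by simp
  have early: "u k \<le> D * M" if "k \<le> k0" for k
  proof -
    have "u k \<le> M * B ^ Suc k"
      unfolding B_def by (rule recurrence_bound_geometric[OF M q \<epsilon> u start step d_lower])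
    also have "\<dots> \<le> M * B ^ Suc k0"
      using M that by (intro mult_left_mono power_increasing) (auto simp: B_def)
    also have "\<dots> \<le> M * D" using M unfolding D_def by (intro mult_left_mono) auto
    finally show ?thesis by (simp add: mult.commute)
  qed
  show ?thesis
    unfolding B_def[symmetric] D_def[symmetric]
  proof (induction k)
    case 0 then show ?case by (rule early) simp
  next
    case (Suc k)
    show ?case
    proof (cases "Suc k \<le> k0")
      case True then show ?thesis by (rule early)
    next
      case False
      have "u (Suc k) * d (Suc k) \<le> M + q * u k" by (rule step)
      also have "\<dots> \<le> M + q * (D * M)" using Suc.IH q by (intro add_left_mono mult_left_mono)
      also have "\<dots> \<le> (D * M) * (q + \<delta>)"
        using mult_left_mono[OF D\<delta> M] by (simp add: algebra_simps)
      also have "\<dots> \<le> (D * M) * d (Suc k)"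
        using d_late[of "Suc k"] False DM by (intro mult_left_mono) auto
      finally show ?thesis
        using d_lower[of "Suc k"] \<epsilon> by simp
    qed
  qed
qed

text \<open>The factor \<open>k + 1\<close> is only needed for \<open>\<mu> = 0\<close>, where \<open>- C\<^sub>t\<close> is inverted by essentially a differentiation.\<close>

definition resolvent_seq_bounded :: "real \<Rightarrow> complex \<Rightarrow> real \<Rightarrow> real \<Rightarrow> bool" where
  "resolvent_seq_bounded t \<mu> D \<rho> \<longleftrightarrow> (\<forall>C M. (\<forall>k. norm (C $ k) \<le> M / \<rho> ^ k) \<longrightarrow>
      (\<forall>k. norm (resolvent_seq t \<mu> C k) \<le> D * M * real (Suc k) / \<rho> ^ k))"

lemma resolvent_seq_bounded_0: "0 < \<rho> \<Longrightarrow> resolvent_seq_bounded t 0 1 \<rho>"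
  unfolding resolvent_seq_bounded_def
proof (intro allI impI)
  fix C :: "complex fps" and M k assume "0 < \<rho>" "\<forall>k. norm (C $ k) \<le> M / \<rho> ^ k"
  then have "real (Suc k) * norm (C $ k) \<le> real (Suc k) * (M / \<rho> ^ k)"
    by (intro mult_left_mono) auto
  moreover have "resolvent_seq t 0 C k = - of_nat (Suc k) * C $ k"
    by (cases k) (simp_all add: field_simps del: of_nat_Suc)
  ultimately show "norm (resolvent_seq t 0 C k) \<le> 1 * M * real (Suc k) / \<rho> ^ k"
    by (simp add: norm_mult mult.commute del: of_nat_Suc)
qed

lemma norm_resolvent_seq_recurrence:
  assumes "\<mu> \<notin> Lambda"
  shows "norm (resolvent_seq t \<mu> C 0) * norm (\<mu> - 1 / of_nat (Suc 0)) = norm (C $ 0)"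
    and "norm (resolvent_seq t \<mu> C (Suc k)) * norm (\<mu> - 1 / of_nat (Suc (Suc k)))
           \<le> norm (C $ Suc k) + norm \<mu> * \<bar>t\<bar> * norm (resolvent_seq t \<mu> C k)"
proof -
  show "norm (resolvent_seq t \<mu> C 0) * norm (\<mu> - 1 / of_nat (Suc 0)) = norm (C $ 0)"
    using not_in_Lambda_nonzero[OF assms, of 0] by (simp add: norm_divide)
  have "norm (resolvent_seq t \<mu> C (Suc k)) * norm (\<mu> - 1 / of_nat (Suc (Suc k)))
      = norm (C $ Suc k + \<mu> * of_real t * resolvent_seq t \<mu> C k)"
    using not_in_Lambda_nonzero[OF assms, of "Suc k"] by (simp add: norm_divide del: of_nat_Suc)
  also have "\<dots> \<le> norm (C $ Suc k) + norm \<mu> * \<bar>t\<bar> * norm (resolvent_seq t \<mu> C k)"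
    by (rule order_trans[OF norm_triangle_ineq]) (simp add: norm_mult)
  finally show "norm (resolvent_seq t \<mu> C (Suc k)) * norm (\<mu> - 1 / of_nat (Suc (Suc k)))
      \<le> norm (C $ Suc k) + norm \<mu> * \<bar>t\<bar> * norm (resolvent_seq t \<mu> C k)" .
qed

text \<open>For \<open>k + 1 > 2 / (\<epsilon> (1 - \<bar>t\<bar>))\<close> the denominator \<open>\<bar>\<mu> - 1/(k+1)\<bar>\<close> exceeds the growth
  factor \<open>\<bar>\<mu>\<bar> \<bar>t\<bar>\<close> by \<open>\<epsilon> (1 - \<bar>t\<bar>) / 2\<close>, so the recurrence bound applies with constants
  depending only on \<open>\<epsilon>\<close>, \<open>L\<close> and \<open>t\<close>.\<close>

lemma resolvent_seq_bounded_uniform: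
  assumes t: "\<bar>t\<bar> < 1" and \<epsilon>: "0 < \<epsilon>" and \<rho>: "0 < \<rho>" "\<rho> \<le> 1"
  obtains D where "0 \<le> D"
    "\<And>\<mu>. (\<And>k. \<epsilon> \<le> norm (\<mu> - 1 / of_nat (Suc k))) \<Longrightarrow> \<epsilon> \<le> norm \<mu> \<Longrightarrow> norm \<mu> \<le> L
      \<Longrightarrow> resolvent_seq_bounded t \<mu> D \<rho>"
proof -
  define \<delta> where "\<delta> = \<epsilon> * (1 - \<bar>t\<bar>) / 2"
  have \<delta>: "0 < \<delta>" using t \<epsilon> by (simp add: \<delta>_def)
  obtain k0 :: nat where k0: "inverse (of_nat (Suc k0)) < \<delta>"
    using reals_Archimedean[OF \<delta>] by blast
  define D where "D = max (max 1 ((1 + L * \<bar>t\<bar>) / \<epsilon>) ^ Suc k0) (1 / \<delta>)"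
  have "0 \<le> D" using \<delta> by (simp add: D_def le_max_iff_disj)
  moreover have "resolvent_seq_bounded t \<mu> D \<rho>"
    if \<mu>: "\<And>k. \<epsilon> \<le> norm (\<mu> - 1 / of_nat (Suc k))" "\<epsilon> \<le> norm \<mu>" "norm \<mu> \<le> L" for \<mu>
    unfolding resolvent_seq_bounded_def
  proof (intro allI impI)
    fix C :: "complex fps" and M :: real and k
    assume C: "\<forall>k. norm (C $ k) \<le> M / \<rho> ^ k"
    have \<mu>_Lambda: "\<mu> \<notin> Lambda"
    proof
      assume "\<mu> \<in> Lambda"
      then obtain n where "\<mu> = 1 / of_nat (Suc n)" by (auto simp: Lambda_def)
      then show False using \<mu>(1)[of n] \<epsilon> by simp
    qed
    define u where "u k = norm (resolvent_seq t \<mu> C k) * \<rho> ^ k" for k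
    define d where "d k = norm (\<mu> - 1 / of_nat (Suc k))" for k
    have C\<rho>: "norm (C $ k) * \<rho> ^ k \<le> M" for k
      using C \<rho> by (simp add: pos_le_divide_eq)
    have M: "0 \<le> M" using C\<rho>[of 0] by (simp add: order_trans[OF norm_ge_zero])
    have "u k \<le> D * M"
      unfolding D_def
    proof (rule recurrence_bound[where d = d and q = "norm \<mu> * \<bar>t\<bar>"])
      show "u 0 * d 0 \<le> M"
        using norm_resolvent_seq_recurrence(1)[OF \<mu>_Lambda] C\<rho>[of 0] by (simp add: u_def d_def)
      show "u (Suc k) * d (Suc k) \<le> M + norm \<mu> * \<bar>t\<bar> * u k" for k
      proof -
        have "u (Suc k) * d (Suc k)
            \<le> (norm (C $ Suc k) + norm \<mu> * \<bar>t\<bar> * norm (resolvent_seq t \<mu> C k)) * \<rho> ^ Suc k"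
          using norm_resolvent_seq_recurrence(2)[OF \<mu>_Lambda, of t C k] \<rho>
          by (simp add: u_def d_def mult_right_mono mult_ac del: of_nat_Suc)
        also have "\<dots> \<le> M + norm \<mu> * \<bar>t\<bar> * u k"
          using C\<rho>[of "Suc k"] \<rho> mult_left_mono[of \<rho> 1 "norm \<mu> * \<bar>t\<bar> * u k"]
          by (simp add: u_def algebra_simps)
        finally show ?thesis .
      qed
      show "norm \<mu> * \<bar>t\<bar> + \<delta> \<le> d k" if "k0 \<le> k" for k
      proof -
        have "1 / real (Suc k) \<le> inverse (of_nat (Suc k0))"
          using that by (simp add: divide_inverse le_imp_inverse_le del: of_nat_Suc)
        then have "1 / real (Suc k) \<le> \<delta>" using k0 by linarith
        moreover have "norm \<mu> - 1 / real (Suc k) \<le> d k"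
          using norm_triangle_ineq2[of \<mu> "1 / of_nat (Suc k)"] by (simp add: d_def norm_divide del: of_nat_Suc)
        moreover have "2 * \<delta> \<le> norm \<mu> * (1 - \<bar>t\<bar>)"
          using \<mu>(2) t by (simp add: \<delta>_def mult_right_mono)
        ultimately show ?thesis by (simp add: algebra_simps)
      qed
    qed (use M \<epsilon> \<delta> \<mu> \<rho> t in \<open>auto simp: u_def d_def intro: mult_right_mono\<close>)
    also have "D * M \<le> D * M * real (Suc k)"
      using mult_left_mono[of 1 "real (Suc k)" "D * M"] M \<open>0 \<le> D\<close> by simp
    finally show "norm (resolvent_seq t \<mu> C k) \<le> D * M * real (Suc k) / \<rho> ^ k"
      using \<rho> by (simp add: u_def pos_le_divide_eq del: of_nat_Suc)
  qed
  ultimately show ?thesis using that by blast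
qed

lemma norm_resolvent_fps_nth_le:
  assumes bounded: "resolvent_seq_bounded t \<mu> D \<rho>" and D: "0 \<le> D" and t: "\<bar>t\<bar> \<le> 1"
    and \<rho>: "0 < \<rho>" "\<rho> \<le> 1" and C: "\<forall>k. norm (C $ k) \<le> M / \<rho> ^ k"
  shows "norm (resolvent_fps t \<mu> C $ k) \<le> 2 * D * M * real (Suc k) / \<rho> ^ k"
proof -
  let ?a = "resolvent_seq t \<mu> C"
  have a: "norm (?a k) \<le> D * M * real (Suc k) / \<rho> ^ k" for k
    using bounded C unfolding resolvent_seq_bounded_def by blast
  have "0 \<le> M" using C[rule_format, of 0] by (simp add: order_trans[OF norm_ge_zero])
  with D have DM: "0 \<le> D * M" by simp
  show ?thesis
  proof (cases k)
    case 0
    then show ?thesis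
      using a[of 0] DM by (simp add: resolvent_fps_def times_one_minus_nth)
  next
    case (Suc j)
    have "norm (resolvent_fps t \<mu> C $ k) \<le> norm (?a (Suc j)) + \<bar>t\<bar> * norm (?a j)"
      using Suc norm_triangle_ineq4[of "?a (Suc j)" "of_real t * ?a j"]
      by (simp add: resolvent_fps_def times_one_minus_nth norm_mult del: resolvent_seq.simps)
    also have "\<dots> \<le> D * M * real (Suc k) / \<rho> ^ k + D * M * real (Suc j) / \<rho> ^ j"
      using a[of "Suc j"] a[of j] t Suc
      by (intro add_mono order_trans[OF mult_right_mono[of "\<bar>t\<bar>" 1]]) auto
    also have "D * M * real (Suc j) / \<rho> ^ j \<le> D * M * real (Suc k) / \<rho> ^ k"
      using DM \<rho> Suc by (intro frac_le mult_left_mono power_decreasing) auto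
    finally show ?thesis by simp
  qed
qed

section \<open>Equicontinuity from coefficient bounds\<close>

lemma
  fixes F :: "complex fps"
  assumes A: "0 \<le> A" and \<rho>: "0 < \<rho>" and F: "\<And>k. norm (F $ k) \<le> A * real (Suc k) / \<rho> ^ k"
    and r: "0 \<le> r" "r < \<rho>" and z: "norm z \<le> r"
  shows summable_norm_fps_of_coeff_bound: "summable (\<lambda>k. norm (F $ k * z ^ k))"
    and norm_eval_fps_le_of_coeff_bound: "norm (eval_fps F z) \<le> A / (1 - r / \<rho>) ^ 2"
proof -
  define x where "x = r / \<rho>"
  have x: "0 \<le> x" "x < 1" using r \<rho> by (auto simp: x_def)
  have sums: "(\<lambda>k. A * (real (Suc k) * x ^ k)) sums (A * (1 / (1 - x) ^ 2))"
    using geometric_deriv_sums[of x] x by (intro sums_mult) simp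
  have le: "norm (F $ k * z ^ k) \<le> A * (real (Suc k) * x ^ k)" for k
  proof -
    have "norm (F $ k * z ^ k) = norm (F $ k) * norm z ^ k" by (simp add: norm_mult norm_power)
    also have "\<dots> \<le> (A * real (Suc k) / \<rho> ^ k) * r ^ k"
      by (intro mult_mono F power_mono z) (use A \<rho> in auto)
    also have "\<dots> = A * (real (Suc k) * x ^ k)"
      by (simp add: x_def power_divide)
    finally show ?thesis .
  qed
  show summable: "summable (\<lambda>k. norm (F $ k * z ^ k))"
    by (rule summable_comparison_test'[OF sums_summable[OF sums]]) (use le in auto)
  have "norm (eval_fps F z) \<le> (\<Sum>k. norm (F $ k * z ^ k))"
    unfolding eval_fps_def by (rule summable_norm[OF summable])
  also have "\<dots> \<le> (\<Sum>k. A * (real (Suc k) * x ^ k))"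
    by (rule suminf_le[OF le summable sums_summable[OF sums]])
  also have "\<dots> = A / (1 - r / \<rho>) ^ 2"
    using sums_unique[OF sums] by (simp add: x_def)
  finally show "norm (eval_fps F z) \<le> A / (1 - r / \<rho>) ^ 2" .
qed

lemma fps_conv_radius_ge_1_of_coeff_bound:
  fixes F :: "complex fps"
  assumes "\<And>\<rho>. 0 < \<rho> \<Longrightarrow> \<rho> < 1 \<Longrightarrow> \<exists>A\<ge>0. \<forall>k. norm (F $ k) \<le> A * real (Suc k) / \<rho> ^ k"
  shows "1 \<le> fps_conv_radius F"
  unfolding fps_conv_radius_def
proof (rule conv_radius_geI_ex')
  fix r :: real assume r: "0 < r" "ereal r < 1"
  define \<rho> where "\<rho> = (1 + r) / 2"
  have \<rho>: "0 < \<rho>" "\<rho> < 1" "r < \<rho>" using r by (auto simp: \<rho>_def)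
  obtain A where "A \<ge> 0" "\<forall>k. norm (F $ k) \<le> A * real (Suc k) / \<rho> ^ k"
    using assms[OF \<rho>(1,2)] by blast
  then have "summable (\<lambda>k. norm (F $ k * complex_of_real r ^ k))"
    using r \<rho> by (intro summable_norm_fps_of_coeff_bound[of A \<rho> F r]) auto
  then show "summable (\<lambda>n. fps_nth F n * of_real r ^ n)"
    by (rule summable_norm_cancel)
qed

definition sup_cball :: "(complex \<Rightarrow> complex) \<Rightarrow> real \<Rightarrow> real" where
  "sup_cball g \<rho> = (SUP w\<in>cball 0 \<rho>. norm (g w))"

lemma norm_le_sup_cball:
  assumes "g \<in> HD" "\<rho> < 1" "w \<in> cball 0 \<rho>"
  shows "norm (g w) \<le> sup_cball g \<rho>"
proof -
  have sub: "cball 0 \<rho> \<subseteq> ball (0::complex) 1" using assms(2) by auto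
  have hol: "g holomorphic_on ball 0 1" using assms(1) by (simp add: HD_def)
  have "continuous_on (cball 0 \<rho>) g"
    by (rule holomorphic_on_imp_continuous_on[OF holomorphic_on_subset[OF hol sub]])
  then have "continuous_on (cball 0 \<rho>) (\<lambda>w. norm (g w))"
    by (intro continuous_intros)
  then have "bdd_above ((\<lambda>w. norm (g w)) ` cball 0 \<rho>)"
    by (intro bounded_imp_bdd_above compact_imp_bounded compact_continuous_image) auto
  then show ?thesis unfolding sup_cball_def by (rule cSUP_upper[OF assms(3)])
qed

lemma sup_cball_nonneg:
  assumes "g \<in> HD" "0 \<le> \<rho>" "\<rho> < 1"
  shows "0 \<le> sup_cball g \<rho>"
proof -
  have "norm (g 0) \<le> sup_cball g \<rho>" using assms by (intro norm_le_sup_cball) auto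
  then show ?thesis by (rule order_trans[OF norm_ge_zero])
qed

lemma norm_fps_expansion_nth_le:
  assumes g: "g \<in> HD" and \<rho>: "0 < \<rho>" "\<rho> < 1"
  shows "norm (fps_expansion g 0 $ k) \<le> sup_cball g \<rho> / \<rho> ^ k"
proof -
  have hol: "g holomorphic_on ball 0 1" using g by (simp add: HD_def)
  have "norm ((deriv ^^ k) g 0) \<le> fact k * sup_cball g \<rho> / \<rho> ^ k"
  proof (rule Cauchy_inequality)
    show "g holomorphic_on ball 0 \<rho>" by (rule holomorphic_on_subset[OF hol]) (use \<rho> in auto)
    show "continuous_on (cball 0 \<rho>) g"
      by (rule holomorphic_on_imp_continuous_on[OF holomorphic_on_subset[OF hol]]) (use \<rho> in auto)
  qed (use \<rho> norm_le_sup_cball[OF g \<rho>(2)] in auto)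
  then show ?thesis
    by (simp add: fps_expansion_def norm_divide field_simps)
qed

lemma compact_in_ball_subset_cball:
  assumes "compact K" "K \<subseteq> ball (0::complex) 1"
  obtains r where "0 \<le> r" "r < 1" "K \<subseteq> cball 0 r"
proof (cases "K = {}")
  case True then show ?thesis using that[of 0] by auto
next
  case False
  obtain x where x: "x \<in> K" "\<forall>y\<in>K. norm y \<le> norm x"
    using continuous_attains_sup[OF assms(1) False continuous_on_norm_id] by blast
  show ?thesis
  proof (rule that)
    show "norm x < 1" using x(1) assms(2) by auto
    show "K \<subseteq> cball 0 (norm x)" using x(2) by auto
  qed simp
qed

lemma equicont_opsI_coeff_bound:
  assumes HD: "\<And>T. T \<in> \<T> \<Longrightarrow> T ` HD \<subseteq> HD"
    and bound: "\<And>\<rho>. 0 < \<rho> \<Longrightarrow> \<rho> < 1 \<Longrightarrow> \<exists>A\<ge>0. \<forall>T\<in>\<T>. \<forall>g\<in>HD. \<forall>k.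
       norm (fps_expansion (T g) 0 $ k) \<le> A * sup_cball g \<rho> * real (Suc k) / \<rho> ^ k"
  shows "equicont_ops \<T>"
  unfolding equicont_ops_def
proof (intro allI impI)
  fix K :: "complex set" assume K: "compact K \<and> K \<subseteq> ball 0 1"
  then obtain r where r: "0 \<le> r" "r < 1" "K \<subseteq> cball 0 r"
    using compact_in_ball_subset_cball by blast
  define \<rho> where "\<rho> = (1 + r) / 2"
  have \<rho>: "0 < \<rho>" "\<rho> < 1" "r < \<rho>" using r by (auto simp: \<rho>_def)
  obtain A where A: "A \<ge> 0"
    "\<And>T g k. T \<in> \<T> \<Longrightarrow> g \<in> HD \<Longrightarrow>
       norm (fps_expansion (T g) 0 $ k) \<le> A * sup_cball g \<rho> * real (Suc k) / \<rho> ^ k"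
    using bound[OF \<rho>(1,2)] by blast
  show "\<exists>K' C. compact K' \<and> K' \<noteq> {} \<and> K' \<subseteq> ball 0 1 \<and>
        (\<forall>T\<in>\<T>. \<forall>f\<in>HD. \<forall>z\<in>K. norm (T f z) \<le> C * (SUP w\<in>K'. norm (f w)))"
  proof (intro exI conjI ballI)
    show "compact (cball (0::complex) \<rho>)" "cball (0::complex) \<rho> \<noteq> {}"
      "cball (0::complex) \<rho> \<subseteq> ball 0 1"
      using \<rho> by auto
    fix T f z assume T: "T \<in> \<T>" and f: "f \<in> HD" and z: "z \<in> K"
    have Tf: "T f \<in> HD" using HD[OF T] f by blast
    have "T f z = eval_fps (fps_expansion (T f) 0) z"
      using eval_fps_expansion_HD[OF Tf, of z] z K by auto
    also have "norm \<dots> \<le> (A * sup_cball f \<rho>) / (1 - r / \<rho>) ^ 2"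
      using A(1) A(2)[OF T f] sup_cball_nonneg[OF f _ \<rho>(2)] \<rho> r z
      by (intro norm_eval_fps_le_of_coeff_bound) auto
    finally show "norm (T f z) \<le> (A / (1 - r / \<rho>) ^ 2) * (SUP w\<in>cball 0 \<rho>. norm (f w))"
      by (simp add: sup_cball_def)
  qed
qed

lemma equicont_ops_subset:
  assumes "equicont_ops \<T>" "\<T>' \<subseteq> \<T>"
  shows "equicont_ops \<T>'"
  unfolding equicont_ops_def
proof (intro allI impI)
  fix K :: "complex set" assume "compact K \<and> K \<subseteq> ball 0 1"
  with assms(1) obtain K' C where K': "compact K' \<and> K' \<noteq> {} \<and> K' \<subseteq> ball 0 1"
    and bound: "\<forall>T\<in>\<T>. \<forall>f\<in>HD. \<forall>z\<in>K. norm (T f z) \<le> C * (SUP w\<in>K'. norm (f w))"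
    unfolding equicont_ops_def by (elim allE impE exE conjE) auto
  have "\<forall>T\<in>\<T>'. \<forall>f\<in>HD. \<forall>z\<in>K. norm (T f z) \<le> C * (SUP w\<in>K'. norm (f w))"
    using bound assms(2) by (simp add: subset_iff)
  with K' show "\<exists>K' C. compact K' \<and> K' \<noteq> {} \<and> K' \<subseteq> ball 0 1 \<and>
          (\<forall>T\<in>\<T>'. \<forall>f\<in>HD. \<forall>z\<in>K. norm (T f z) \<le> C * (SUP w\<in>K'. norm (f w)))"
    by (intro exI[of _ K'] exI[of _ C]) simp
qed

lemma is_inverse_of_in_HD: "is_inverse_of T \<mu> S \<Longrightarrow> g \<in> HD \<Longrightarrow> S g \<in> HD"
  unfolding is_inverse_of_def by blast

lemma fps_expansion_inverse_Ct:
  assumes t: "\<bar>t\<bar> \<le> 1" and \<mu>: "\<mu> \<notin> Lambda" and S: "is_inverse_of (Ct t) \<mu> S" and g: "g \<in> HD"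
  shows "fps_expansion (S g) 0 = resolvent_fps t \<mu> (fps_expansion g 0)"
proof -
  have Sg: "S g \<in> HD" by (rule is_inverse_of_in_HD[OF S g])
  have "fps_expansion (\<lambda>w. \<mu> * S g w - Ct t (S g) w) 0 = fps_expansion g 0"
    using S g eval_fps_expansion_HD[OF g]
    by (intro fps_expansion_eqI_disc[OF fps_conv_radius_expansion_HD[OF g]])
       (auto simp: is_inverse_of_def)
  then show ?thesis
    using fps_expansion_shifted_Ct[OF Sg t] shifted_cesaro_fps_eq_iff[OF \<mu>] by simp
qed

lemma norm_resolvent_fps_expansion_nth_le:
  assumes "resolvent_seq_bounded t \<mu> D \<rho>" "0 \<le> D" "\<bar>t\<bar> \<le> 1" "0 < \<rho>" "\<rho> < 1" "g \<in> HD"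
  shows "norm (resolvent_fps t \<mu> (fps_expansion g 0) $ k)
           \<le> 2 * D * sup_cball g \<rho> * real (Suc k) / \<rho> ^ k"
proof (rule norm_resolvent_fps_nth_le[OF assms(1-4)])
  show "\<rho> \<le> 1" using assms(5) by simp
  show "\<forall>k. norm (fps_expansion g 0 $ k) \<le> sup_cball g \<rho> / \<rho> ^ k"
    using norm_fps_expansion_nth_le[OF assms(6,4,5)] by blast
qed

lemma equicont_inverses_Ct:
  assumes t: "\<bar>t\<bar> \<le> 1" and U: "U \<inter> Lambda = {}"
    and bounded: "\<And>\<rho>. 0 < \<rho> \<Longrightarrow> \<rho> < 1 \<Longrightarrow> \<exists>D\<ge>0. \<forall>\<mu>\<in>U. resolvent_seq_bounded t \<mu> D \<rho>"
  shows "equicont_ops {S. \<exists>\<mu>\<in>U. is_inverse_of (Ct t) \<mu> S}"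
proof (rule equicont_opsI_coeff_bound)
  fix T assume "T \<in> {S. \<exists>\<mu>\<in>U. is_inverse_of (Ct t) \<mu> S}"
  then show "T ` HD \<subseteq> HD" using is_inverse_of_in_HD by blast
next
  fix \<rho> :: real assume \<rho>: "0 < \<rho>" "\<rho> < 1"
  obtain D where D: "D \<ge> 0" "\<forall>\<mu>\<in>U. resolvent_seq_bounded t \<mu> D \<rho>"
    using bounded[OF \<rho>] by blast
  have bound: "\<forall>g\<in>HD. \<forall>k. norm (fps_expansion (T g) 0 $ k)
                 \<le> 2 * D * sup_cball g \<rho> * real (Suc k) / \<rho> ^ k"
    if "T \<in> {S. \<exists>\<mu>\<in>U. is_inverse_of (Ct t) \<mu> S}" for T
  proof (intro ballI allI)
    fix g k assume g: "g \<in> HD"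
    from that obtain \<mu> where \<mu>: "\<mu> \<in> U" "is_inverse_of (Ct t) \<mu> T" by blast
    have "\<mu> \<notin> Lambda" using U \<mu>(1) by blast
    then show "norm (fps_expansion (T g) 0 $ k) \<le> 2 * D * sup_cball g \<rho> * real (Suc k) / \<rho> ^ k"
      unfolding fps_expansion_inverse_Ct[OF t \<open>\<mu> \<notin> Lambda\<close> \<mu>(2) g]
      using D \<mu>(1) t \<rho> g by (intro norm_resolvent_fps_expansion_nth_le) auto
  qed
  show "\<exists>A\<ge>0. \<forall>T\<in>{S. \<exists>\<mu>\<in>U. is_inverse_of (Ct t) \<mu> S}. \<forall>g\<in>HD. \<forall>k.
      norm (fps_expansion (T g) 0 $ k) \<le> A * sup_cball g \<rho> * real (Suc k) / \<rho> ^ k"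
    using D(1) bound by (intro exI[of _ "2 * D"] conjI) auto
qed

definition resolvent_Ct :: "real \<Rightarrow> complex \<Rightarrow> (complex \<Rightarrow> complex) \<Rightarrow> complex \<Rightarrow> complex" where
  "resolvent_Ct t \<mu> g = eval_fps (resolvent_fps t \<mu> (fps_expansion g 0))"

context
  fixes t :: real and \<mu> :: complex
  assumes t: "\<bar>t\<bar> \<le> 1" and \<mu>: "\<mu> \<notin> Lambda"
    and bounded: "\<And>\<rho>. 0 < \<rho> \<Longrightarrow> \<rho> < 1 \<Longrightarrow> \<exists>D\<ge>0. resolvent_seq_bounded t \<mu> D \<rho>"
begin

lemma fps_conv_radius_resolvent_fps_expansion:
  assumes g: "g \<in> HD"
  shows "1 \<le> fps_conv_radius (resolvent_fps t \<mu> (fps_expansion g 0))"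
proof (rule fps_conv_radius_ge_1_of_coeff_bound)
  fix \<rho> :: real assume \<rho>: "0 < \<rho>" "\<rho> < 1"
  then obtain D where D: "resolvent_seq_bounded t \<mu> D \<rho>" "D \<ge> 0" using bounded by blast
  have "0 \<le> 2 * D * sup_cball g \<rho>"
    using D(2) sup_cball_nonneg[OF g _ \<rho>(2)] \<rho>(1) by simp
  then show "\<exists>A\<ge>0. \<forall>k. norm (resolvent_fps t \<mu> (fps_expansion g 0) $ k) \<le> A * real (Suc k) / \<rho> ^ k"
    using norm_resolvent_fps_expansion_nth_le[OF D t \<rho> g] by blast
qed

lemma resolvent_Ct_in_HD: "g \<in> HD \<Longrightarrow> resolvent_Ct t \<mu> g \<in> HD"
  using fps_conv_radius_resolvent_fps_expansion unfolding resolvent_Ct_def HD_def mem_Collect_eq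
  by (intro holomorphic_on_eval_fps ball_eball_mono) (simp flip: one_ereal_def)

lemma fps_expansion_resolvent_Ct:
  "g \<in> HD \<Longrightarrow> fps_expansion (resolvent_Ct t \<mu> g) 0 = resolvent_fps t \<mu> (fps_expansion g 0)"
  using fps_conv_radius_resolvent_fps_expansion
  by (intro fps_expansion_eqI_disc) (simp_all add: resolvent_Ct_def)

lemma is_inverse_of_resolvent_Ct: "is_inverse_of (Ct t) \<mu> (resolvent_Ct t \<mu>)"
  unfolding is_inverse_of_def
proof (intro conjI ballI)
  fix g assume "g \<in> HD"
  then show "resolvent_Ct t \<mu> g \<in> HD" by (rule resolvent_Ct_in_HD)
next
  fix g z assume g: "g \<in> HD" and z: "z \<in> ball (0::complex) 1"
  show "\<mu> * resolvent_Ct t \<mu> g z - Ct t (resolvent_Ct t \<mu> g) z = g z"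
    using shifted_Ct_eq_eval_fps[OF resolvent_Ct_in_HD[OF g] t z] eval_fps_expansion_HD[OF g z]
    by (simp add: fps_expansion_resolvent_Ct[OF g] shifted_cesaro_resolvent_fps[OF \<mu>])
next
  fix f z assume f: "f \<in> HD" and z: "z \<in> ball (0::complex) 1"
  have "resolvent_fps t \<mu> (fps_expansion (\<lambda>w. \<mu> * f w - Ct t f w) 0) = fps_expansion f 0"
    unfolding fps_expansion_shifted_Ct[OF f t]
    by (rule sym) (simp add: shifted_cesaro_fps_eq_iff[OF \<mu>, symmetric])
  then show "resolvent_Ct t \<mu> (\<lambda>w. \<mu> * f w - Ct t f w) z = f z"
    using eval_fps_expansion_HD[OF f z] by (simp add: resolvent_Ct_def)
qed

lemma lin_op_resolvent_Ct: "lin_op (resolvent_Ct t \<mu>)"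
  unfolding lin_op_def
proof (intro conjI ballI allI)
  fix f g z assume f: "f \<in> HD" and g: "g \<in> HD" and z: "z \<in> ball (0::complex) 1"
  show "resolvent_Ct t \<mu> (\<lambda>w. f w + g w) z = resolvent_Ct t \<mu> f z + resolvent_Ct t \<mu> g z"
    using fps_conv_radius_resolvent_fps_expansion[OF f] fps_conv_radius_resolvent_fps_expansion[OF g] z
    by (simp add: resolvent_Ct_def fps_expansion_add_HD[OF f g] resolvent_fps_add[OF \<mu>] eval_fps_add
        ereal_norm_less_conv_radius)
next
  fix f c z assume f: "f \<in> HD" and z: "z \<in> ball (0::complex) 1"
  show "resolvent_Ct t \<mu> (\<lambda>w. c * f w) z = c * resolvent_Ct t \<mu> f z"
    using fps_conv_radius_resolvent_fps_expansion[OF f] z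
    by (simp add: resolvent_Ct_def fps_expansion_cmult_HD[OF f] resolvent_fps_const_mult[OF \<mu>]
        eval_fps_mult ereal_norm_less_conv_radius)
qed (rule resolvent_Ct_in_HD)

lemma resolvent_set_CtI: "\<mu> \<in> resolvent_set (Ct t)"
proof -
  have "equicont_ops {resolvent_Ct t \<mu>}"
  proof (rule equicont_ops_subset)
    show "equicont_ops {S. \<exists>\<mu>'\<in>{\<mu>}. is_inverse_of (Ct t) \<mu>' S}"
      by (rule equicont_inverses_Ct[OF t]) (use \<mu> bounded in simp_all)
    show "{resolvent_Ct t \<mu>} \<subseteq> {S. \<exists>\<mu>'\<in>{\<mu>}. is_inverse_of (Ct t) \<mu>' S}"
      using is_inverse_of_resolvent_Ct by simp
  qed
  then show ?thesis
    unfolding resolvent_set_def cont_lin_op_def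
    using lin_op_resolvent_Ct is_inverse_of_resolvent_Ct by blast
qed

end

section \<open>Spectra\<close>

text \<open>Operators are only constrained on the disc, so a function vanishing on the disc need not
  be mapped to a function vanishing there; continuity rules this out.\<close>

lemma cont_lin_op_vanishing:
  assumes S: "cont_lin_op S" and h: "h \<in> HD" "\<forall>w\<in>ball 0 1. h w = 0" and z: "z \<in> ball 0 1"
  shows "S h z = 0"
proof -
  have "equicont_ops {S}" using S by (simp add: cont_lin_op_def)
  moreover have "compact {z} \<and> {z} \<subseteq> ball 0 1" using z by simp
  ultimately have "\<exists>K' C. compact K' \<and> K' \<noteq> {} \<and> K' \<subseteq> ball 0 1 \<and>
      (\<forall>T\<in>{S}. \<forall>f\<in>HD. \<forall>w\<in>{z}. norm (T f w) \<le> C * (SUP w\<in>K'. norm (f w)))"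
    unfolding equicont_ops_def by blast
  then obtain K' C where K': "K' \<noteq> {}" "K' \<subseteq> ball 0 1"
    and bound: "norm (S h z) \<le> C * (SUP w\<in>K'. norm (h w))"
    using h(1) by auto
  have "(SUP w\<in>K'. norm (h w)) = (SUP w\<in>K'. 0::real)"
    using K'(2) h(2) by (intro SUP_cong) auto
  with K'(1) bound show ?thesis by simp
qed

lemma point_spectrum_subset_spectrum:
  assumes "\<And>f. f \<in> HD \<Longrightarrow> T f \<in> HD"
  shows "point_spectrum_H T \<subseteq> spectrum_H T"
proof
  fix lam assume "lam \<in> point_spectrum_H T"
  then obtain f z where f: "f \<in> HD" and z: "z \<in> ball 0 1" "f z \<noteq> 0"
    and eigen: "\<forall>w\<in>ball 0 1. lam * f w - T f w = 0"
    unfolding point_spectrum_H_def by blast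
  show "lam \<in> spectrum_H T"
    unfolding spectrum_H_def
  proof
    assume "lam \<in> resolvent_set T"
    then obtain S where S: "cont_lin_op S" "is_inverse_of T lam S"
      unfolding resolvent_set_def by blast
    let ?h = "\<lambda>w. lam * f w - T f w"
    have "?h \<in> HD"
      using f assms[OF f] unfolding HD_def by (auto intro!: holomorphic_intros)
    then have "S ?h z = 0" using cont_lin_op_vanishing[OF S(1)] eigen z(1) by blast
    moreover have "S ?h z = f z" using S(2) f z(1) unfolding is_inverse_of_def by blast
    ultimately show False using z(2) by simp
  qed
qed

lemma resolvent_star_subset_resolvent_set: "resolvent_star T \<subseteq> resolvent_set T"
  unfolding resolvent_star_def by auto

lemma open_resolvent_star: "open (resolvent_star T)"
  unfolding open_contains_ball
proof
  fix lam assume "lam \<in> resolvent_star T"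
  then obtain \<delta> where \<delta>: "\<delta> > 0" "ball lam \<delta> \<subseteq> resolvent_set T"
    and equi: "equicont_ops {S. \<exists>\<mu>\<in>ball lam \<delta>. cont_lin_op S \<and> is_inverse_of T \<mu> S}"
    unfolding resolvent_star_def by blast
  have "\<mu> \<in> resolvent_star T" if \<mu>: "\<mu> \<in> ball lam \<delta>" for \<mu>
  proof -
    define \<epsilon> where "\<epsilon> = \<delta> - dist lam \<mu>"
    have \<epsilon>: "\<epsilon> > 0" using \<mu> by (simp add: \<epsilon>_def)
    have sub: "ball \<mu> \<epsilon> \<subseteq> ball lam \<delta>"
    proof
      fix x assume "x \<in> ball \<mu> \<epsilon>"
      moreover have "dist lam x \<le> dist lam \<mu> + dist \<mu> x" by (rule dist_triangle)
      ultimately show "x \<in> ball lam \<delta>" by (simp add: \<epsilon>_def)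
    qed
    have "equicont_ops {S. \<exists>\<nu>\<in>ball \<mu> \<epsilon>. cont_lin_op S \<and> is_inverse_of T \<nu> S}"
      by (rule equicont_ops_subset[OF equi]) (use sub in blast)
    then show ?thesis
      unfolding resolvent_star_def using \<epsilon> sub \<delta>(2) by blast
  qed
  with \<delta>(1) show "\<exists>e>0. ball lam e \<subseteq> resolvent_star T" by blast
qed

lemma closure_spectrum_subset_spectrum_star: "closure (spectrum_H T) \<subseteq> spectrum_star T"
proof (rule closure_minimal)
  show "spectrum_H T \<subseteq> spectrum_star T"
    using resolvent_star_subset_resolvent_set[of T]
    by (auto simp: spectrum_H_def spectrum_star_def)
  show "closed (spectrum_star T)"
    unfolding spectrum_star_def by (rule closed_Compl[OF open_resolvent_star])
qed

lemma closure_Lambda: "closure Lambda = insert 0 Lambda"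
proof -
  have Lambda: "Lambda = range (\<lambda>n. 1 / of_nat (Suc n))"
    by (auto simp: Lambda_def)
  have lim: "(\<lambda>n. 1 / of_nat (Suc n) :: complex) \<longlonglongrightarrow> 0"
    using LIMSEQ_Suc[OF lim_1_over_n] by simp
  have "closed (insert 0 Lambda)"
    unfolding Lambda by (intro compact_imp_closed compact_sequence_with_limit lim)
  then have "closure Lambda \<subseteq> insert 0 Lambda"
    by (intro closure_minimal) auto
  moreover have "0 \<in> closure Lambda"
    unfolding closure_sequential Lambda using lim
    by (intro exI[of _ "\<lambda>n. 1 / of_nat (Suc n)"]) auto
  ultimately show ?thesis using closure_subset by blast
qed

definition eigenfunction_Ct :: "real \<Rightarrow> nat \<Rightarrow> complex \<Rightarrow> complex" where
  "eigenfunction_Ct t n w = w ^ n / (1 - complex_of_real t * w) ^ (n + 1)"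

lemma eigenfunction_Ct_HD:
  assumes "\<bar>t\<bar> \<le> 1"
  shows "eigenfunction_Ct t n \<in> HD"
  using one_minus_of_real_mult_nonzero[OF assms]
  unfolding HD_def eigenfunction_Ct_def by (auto intro!: holomorphic_intros)

lemma eigenfunction_Ct_primitive:
  assumes t: "\<bar>t\<bar> \<le> 1" and w: "w \<in> ball 0 1"
  shows "((\<lambda>w. (1 / of_nat (n + 1)) * (w / (1 - complex_of_real t * w)) ^ (n + 1))
           has_field_derivative (eigenfunction_Ct t n w / (1 - complex_of_real t * w))) (at w within ball 0 1)"
proof -
  define g where "g = 1 - complex_of_real t * w"
  have g: "g \<noteq> 0" unfolding g_def by (rule one_minus_of_real_mult_nonzero[OF t w])
  have "((\<lambda>w. w / (1 - complex_of_real t * w)) has_field_derivative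
        ((1 * g - w * (0 - complex_of_real t * 1)) / (g * g))) (at w)"
    unfolding g_def
    by (rule DERIV_divide[OF DERIV_ident DERIV_diff[OF DERIV_const DERIV_cmult[OF DERIV_ident]]])
       (use g in \<open>simp add: g_def\<close>)
  moreover have "(1 * g - w * (0 - complex_of_real t * 1)) / (g * g) = 1 / g ^ 2"
    by (simp add: g_def power2_eq_square)
  ultimately have "((\<lambda>w. w / (1 - complex_of_real t * w)) has_field_derivative 1 / g ^ 2) (at w)"
    by simp
  from DERIV_cmult[OF DERIV_power[OF this, of "n + 1"], of "1 / of_nat (n + 1)"]
  have "((\<lambda>w. (1 / of_nat (n + 1)) * (w / (1 - complex_of_real t * w)) ^ (n + 1)) has_field_derivative
       ((1 / of_nat (n + 1)) * (of_nat (n + 1) * (w / g) ^ n * (1 / g ^ 2)))) (at w)"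
    by (simp add: g_def)
  moreover have "(1 / of_nat (n + 1)) * (of_nat (n + 1) * (w / g) ^ n * (1 / g ^ 2))
      = eigenfunction_Ct t n w / g"
  proof -
    have "(of_nat (n + 1) :: complex) \<noteq> 0" by (simp only: of_nat_eq_0_iff)
    then have "(1 / of_nat (n + 1)) * (of_nat (n + 1) * (w / g) ^ n * (1 / g ^ 2))
        = (w / g) ^ n * (1 / g ^ 2)"
      by simp
    also have "\<dots> = w ^ n / (g ^ (n + 1) * g)"
      using g by (simp add: power_divide power2_eq_square field_simps)
    also have "\<dots> = eigenfunction_Ct t n w / g"
      by (simp add: eigenfunction_Ct_def g_def)
    finally show ?thesis .
  qed
  ultimately show ?thesis
    by (simp add: g_def has_field_derivative_at_within)
qed

lemma Ct_eigenfunction: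
  assumes t: "\<bar>t\<bar> \<le> 1" and z: "z \<in> ball 0 1"
  shows "Ct t (eigenfunction_Ct t n) z = eigenfunction_Ct t n z / of_nat (n + 1)"
proof (cases "z = 0")
  case True
  then show ?thesis by (cases n) (simp_all add: Ct_def eigenfunction_Ct_def)
next
  case False
  define P where "P w = (1 / of_nat (n + 1)) * (w / (1 - complex_of_real t * w)) ^ (n + 1)" for w
  have "path_image (linepath 0 z) \<subseteq> ball 0 1"
    using z by (simp add: closed_segment_subset)
  then have "((\<lambda>w. eigenfunction_Ct t n w / (1 - complex_of_real t * w)) has_contour_integral
      (P (pathfinish (linepath 0 z)) - P (pathstart (linepath 0 z)))) (linepath 0 z)"
    unfolding P_def
    by (intro contour_integral_primitive[OF eigenfunction_Ct_primitive[OF t] valid_path_linepath])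
  then have "contour_integral (linepath 0 z) (\<lambda>w. eigenfunction_Ct t n w / (1 - complex_of_real t * w))
      = P z"
    by (simp add: contour_integral_unique P_def)
  then have "Ct t (eigenfunction_Ct t n) z = (1 / z) * P z"
    using False by (simp add: Ct_def)
  also have "\<dots> = eigenfunction_Ct t n z / of_nat (n + 1)"
    using False by (simp add: P_def eigenfunction_Ct_def power_divide field_simps)
  finally show ?thesis .
qed

lemma Lambda_subset_point_spectrum_Ct:
  assumes t: "\<bar>t\<bar> \<le> 1"
  shows "Lambda \<subseteq> point_spectrum_H (Ct t)"
proof
  fix lam assume "lam \<in> Lambda"
  then obtain n where n: "lam = 1 / of_nat (n + 1)" unfolding Lambda_def by blast
  have half: "(1/2 :: complex) \<in> ball 0 1" by simp
  have "eigenfunction_Ct t n (1/2) \<noteq> 0"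
    using one_minus_of_real_mult_nonzero[OF t half] by (simp add: eigenfunction_Ct_def)
  moreover have "\<forall>z\<in>ball 0 1. lam * eigenfunction_Ct t n z - Ct t (eigenfunction_Ct t n) z = 0"
    using Ct_eigenfunction[OF t] n by simp
  ultimately show "lam \<in> point_spectrum_H (Ct t)"
    unfolding point_spectrum_H_def mem_Collect_eq
    by (intro bexI[OF _ eigenfunction_Ct_HD[OF t]] conjI bexI[OF _ half])
qed

lemma point_spectrum_Ct_subset_Lambda:
  assumes t: "\<bar>t\<bar> \<le> 1"
  shows "point_spectrum_H (Ct t) \<subseteq> Lambda"
proof
  fix lam assume "lam \<in> point_spectrum_H (Ct t)"
  then obtain f z where f: "f \<in> HD" and z: "z \<in> ball 0 1" "f z \<noteq> 0"
    and eigen: "\<forall>w\<in>ball 0 1. lam * f w - Ct t f w = 0"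
    unfolding point_spectrum_H_def by blast
  show "lam \<in> Lambda"
  proof (rule ccontr)
    assume lam: "lam \<notin> Lambda"
    have "fps_expansion (\<lambda>w. lam * f w - Ct t f w) 0 = 0"
      by (rule fps_expansion_eqI_disc) (use eigen in auto)
    then have "fps_expansion f 0 = resolvent_fps t lam 0"
      unfolding fps_expansion_shifted_Ct[OF f t] shifted_cesaro_fps_eq_iff[OF lam] .
    then have "f z = 0"
      using eval_fps_expansion_HD[OF f z(1)] resolvent_fps_0[OF lam] by simp
    with z(2) show False ..
  qed
qed

lemma zero_in_resolvent_set_Ct:
  assumes "\<bar>t\<bar> \<le> 1"
  shows "0 \<in> resolvent_set (Ct t)"
proof (rule resolvent_set_CtI[OF assms])
  have "(1 / of_nat (n + 1) :: complex) \<noteq> 0" for n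
    by (simp only: divide_eq_0_iff of_nat_eq_0_iff) simp
  then show "0 \<notin> Lambda" unfolding Lambda_def mem_Collect_eq by metis
  show "\<exists>D\<ge>0. resolvent_seq_bounded t 0 D \<rho>" if "0 < \<rho>" for \<rho>
    using resolvent_seq_bounded_0[OF that] zero_le_one by blast
qed

text \<open>Away from the closed set \<open>\<Lambda> \<union> {0}\<close> the constants of the recurrence bound are uniform,
  which yields the equicontinuity of the resolvents near \<open>lam\<close>.\<close>

lemma resolvent_seq_bounded_near:
  assumes t: "\<bar>t\<bar> < 1" and \<epsilon>: "0 < \<epsilon>" and \<rho>: "0 < \<rho>" "\<rho> < 1"
    and far: "\<And>\<mu> p. \<mu> \<in> ball lam \<epsilon> \<Longrightarrow> p \<in> insert 0 Lambda \<Longrightarrow> \<epsilon> \<le> norm (\<mu> - p)"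
  shows "\<exists>D\<ge>0. \<forall>\<mu>\<in>ball lam \<epsilon>. resolvent_seq_bounded t \<mu> D \<rho>"
proof -
  obtain D where D: "0 \<le> D" "\<And>\<mu>. (\<And>k. \<epsilon> \<le> norm (\<mu> - 1 / of_nat (Suc k))) \<Longrightarrow> \<epsilon> \<le> norm \<mu>
      \<Longrightarrow> norm \<mu> \<le> norm lam + \<epsilon> \<Longrightarrow> resolvent_seq_bounded t \<mu> D \<rho>"
    using resolvent_seq_bounded_uniform[OF t \<epsilon> \<rho>(1)] \<rho>(2) by auto
  have "resolvent_seq_bounded t \<mu> D \<rho>" if \<mu>: "\<mu> \<in> ball lam \<epsilon>" for \<mu>
  proof (rule D(2))
    show "\<epsilon> \<le> norm (\<mu> - 1 / of_nat (Suc k))" for k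
      using far[OF \<mu>, of "1 / of_nat (Suc k)"] by (auto simp: Lambda_def)
    show "\<epsilon> \<le> norm \<mu>" using far[OF \<mu>, of 0] by simp
    show "norm \<mu> \<le> norm lam + \<epsilon>"
      using \<mu> norm_triangle_sub[of \<mu> lam] by (simp add: dist_norm norm_minus_commute)
  qed
  with D(1) show ?thesis by blast
qed

lemma resolvent_star_CtI:
  assumes t: "\<bar>t\<bar> < 1" and lam: "lam \<notin> insert 0 Lambda"
  shows "lam \<in> resolvent_star (Ct t)"
proof -
  have "open (- insert 0 Lambda)"
    using closure_Lambda by (metis closed_closure open_Compl)
  then obtain e where e: "e > 0" "ball lam e \<subseteq> - insert 0 Lambda"
    using lam by (auto simp: open_contains_ball)
  define \<epsilon> where "\<epsilon> = e / 2"
  have \<epsilon>: "\<epsilon> > 0" using e by (simp add: \<epsilon>_def)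
  have far: "\<epsilon> \<le> norm (\<mu> - p)" if \<mu>: "\<mu> \<in> ball lam \<epsilon>" and p: "p \<in> insert 0 Lambda" for \<mu> p
  proof -
    have "e \<le> dist lam p" using e(2) p by (auto simp: subset_iff not_less[symmetric])
    moreover have "dist lam p \<le> dist lam \<mu> + dist \<mu> p" by (rule dist_triangle)
    ultimately show ?thesis using \<mu> by (simp add: \<epsilon>_def dist_norm)
  qed
  have U: "ball lam \<epsilon> \<inter> Lambda = {}"
    using far \<epsilon> by fastforce
  note bounded = resolvent_seq_bounded_near[OF t \<epsilon> _ _ far]
  have "ball lam \<epsilon> \<subseteq> resolvent_set (Ct t)"
  proof
    fix \<mu> assume \<mu>: "\<mu> \<in> ball lam \<epsilon>"
    show "\<mu> \<in> resolvent_set (Ct t)"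
    proof (rule resolvent_set_CtI)
      show "\<bar>t\<bar> \<le> 1" using t by simp
      show "\<mu> \<notin> Lambda" using U \<mu> by blast
      show "\<exists>D\<ge>0. resolvent_seq_bounded t \<mu> D \<rho>" if "0 < \<rho>" "\<rho> < 1" for \<rho>
        using bounded[OF that] \<mu> by blast
    qed
  qed
  moreover have "equicont_ops {S. \<exists>\<mu>\<in>ball lam \<epsilon>. cont_lin_op S \<and> is_inverse_of (Ct t) \<mu> S}"
    by (rule equicont_ops_subset[OF equicont_inverses_Ct[OF _ U bounded]]) (use t in auto)
  ultimately show ?thesis
    unfolding resolvent_star_def using \<epsilon> by blast
qed

theorem proposition3p7:
  fixes t :: real
  assumes "0 \<le> t" and "t < 1"
  shows "point_spectrum_H (Ct t) = {1 / of_nat (n + 1) | n :: nat. True}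
       \<and> spectrum_H (Ct t) = {1 / of_nat (n + 1) | n :: nat. True}
       \<and> spectrum_star (Ct t) = {1 / of_nat (n + 1) | n :: nat. True} \<union> {0}"
proof -
  have t: "\<bar>t\<bar> < 1" and t': "\<bar>t\<bar> \<le> 1" using assms by auto
  have point: "point_spectrum_H (Ct t) = Lambda"
    using Lambda_subset_point_spectrum_Ct[OF t'] point_spectrum_Ct_subset_Lambda[OF t'] by blast
  have "\<mu> \<in> resolvent_set (Ct t)" if "\<mu> \<notin> Lambda" for \<mu>
  proof (cases "\<mu> = 0")
    case True
    then show ?thesis using zero_in_resolvent_set_Ct[OF t'] by simp
  next
    case False
    then have "\<mu> \<in> resolvent_star (Ct t)" using that by (intro resolvent_star_CtI[OF t]) simp
    then show ?thesis using resolvent_star_subset_resolvent_set by blast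
  qed
  then have "spectrum_H (Ct t) \<subseteq> Lambda"
    by (auto simp: spectrum_H_def)
  moreover have "Lambda \<subseteq> spectrum_H (Ct t)"
    using point point_spectrum_subset_spectrum[of "Ct t"] Ct_in_HD[OF _ t'] by blast
  ultimately have spectrum: "spectrum_H (Ct t) = Lambda" by (rule antisym)
  have "spectrum_star (Ct t) \<subseteq> insert 0 Lambda"
    using resolvent_star_CtI[OF t] by (auto simp: spectrum_star_def)
  moreover have "insert 0 Lambda \<subseteq> spectrum_star (Ct t)"
    using closure_spectrum_subset_spectrum_star[of "Ct t"] by (simp add: spectrum closure_Lambda)
  ultimately have "spectrum_star (Ct t) = insert 0 Lambda" by blast
  with point spectrum show ?thesis by (simp add: Lambda_def)
qed

end
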